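(* Let $f:\mathbb{R}^d\to\mathbb{R}$ be differentiable with $L$-Lipschitz gradient. Consider single-step SGD iterations (as defined in the context) with constant learning rate $\alpha\le\frac{1}{6L}$ satisfying elastic consistency with constant $B$. Then for every $t\ge0$, $$\mathbb{E}[f(\vec x_{t+1})]\le\mathbb{E}[f(\vec x_t)]-\frac{\alpha}{4}\mathbb{E}\|\nabla f(\vec x_t)\|^2+\frac{\alpha^3B^2L^2}{2}+\frac{3L\alpha^2\sigma^2}{2}+\frac{3L^3\alpha^4B^2}{2}.$$
   Context: All random objects live on a probability space with a filtration $(\mathcal F_t)_{t\ge0}$. Single-step SGD iterations: $\vec x_0\in\mathbb{R}^d$ is deterministic. At each iteration $t\ge0$ some processor $i=i_t$ (chosen independently of the algorithm's randomness) holds a view $\vec v_t^{i}$. The vectors $\vec x_t,\vec v_t^{i}$ are $\mathcal F_t$-measurable, and the processor computes an $\mathcal F_{t+1}$-measurable stochastic gradient $\tilde G(\vec v_t^{i})$ with $\mathbb{E}[\tilde G(\vec v_t^{i})\mid\mathcal F_t]=\nabla f(\vec v_t^{i})$ and $\mathbb{E}[\|\tilde G(\vec v_t^{i})-\nabla f(\vec v_t^{i})\|^2\mid\mathcal F_t]\le\sigma^2$. Update: $\vec x_{t+1}=\vec x_t-\alpha\tilde G(\vec v_t^{i})$. Elastic consistency with constant $B>0$: $\mathbb{E}\|\vec x_t-\vec v_t^{i}\|^2\le\alpha^2B^2$ for every $t$ and the processor $i$ acting at $t$. *)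

theory Defs
  imports "HOL-Probability.Probability"
begin
end

theory Submission
  imports Defs
begin

text \<open>
  One SGD step is first analysed pathwise with the descent lemma for an \<open>L\<close>-smooth \<open>f\<close>.
  The stochastic gradient is split as \<open>g = \<nabla>f(x) + (g - \<nabla>f(v)) + (\<nabla>f(v) - \<nabla>f(x))\<close>:
  the middle term has conditional mean zero given \<open>F\<^sub>t\<close>, hence is orthogonal in \<open>L\<^sup>2\<close> to the
  \<open>F\<^sub>t\<close>-measurable \<open>\<nabla>f(x)\<close>, and its second moment is at most \<open>\<sigma>\<^sup>2\<close>; the last term is at
  most \<open>L \<parallel>x - v\<parallel>\<close>, whose second moment elastic consistency bounds by \<open>L\<^sup>2\<alpha>\<^sup>2B\<^sup>2\<close>.
  The step size condition \<open>L\<alpha> \<le> 1/6\<close> lets the descent term absorb the multiple of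
  \<open>\<parallel>\<nabla>f(x)\<parallel>\<^sup>2\<close> produced by the quadratic part of the descent lemma.
\<close>

lemma lipschitz_grad_quadratic_upper_bound:
  fixes f :: "'v::real_inner \<Rightarrow> real" and grad :: "'v \<Rightarrow> 'v"
  assumes grad_f: "\<And>y. (f has_derivative (\<lambda>h. grad y \<bullet> h)) (at y)"
    and lipschitz: "\<And>y z. norm (grad y - grad z) \<le> L * norm (y - z)"
  shows "f y \<le> f x + grad x \<bullet> (y - x) + L / 2 * (norm (y - x))\<^sup>2"
proof -
  define d where "d = y - x"
  define \<phi> where "\<phi> s = f (x + s *\<^sub>R d) - s * (grad x \<bullet> d) - L / 2 * s\<^sup>2 * (norm d)\<^sup>2" for s :: real
  have der: "(\<phi> has_real_derivative ((grad (x + s *\<^sub>R d) - grad x) \<bullet> d - L * s * (norm d)\<^sup>2)) (at s)" for s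
  proof -
    have "((\<lambda>s. x + s *\<^sub>R d) has_derivative (\<lambda>h. h *\<^sub>R d)) (at s)"
      by (auto intro!: derivative_eq_intros)
    from has_derivative_compose[OF this grad_f]
    have "((\<lambda>s. f (x + s *\<^sub>R d)) has_derivative (\<lambda>h. grad (x + s *\<^sub>R d) \<bullet> (h *\<^sub>R d))) (at s)" .
    hence "((\<lambda>s. f (x + s *\<^sub>R d)) has_real_derivative (grad (x + s *\<^sub>R d) \<bullet> d)) (at s)"
      by (rule has_derivative_imp_has_field_derivative) (simp add: mult.commute)
    then show ?thesis unfolding \<phi>_def
      by (auto intro!: derivative_eq_intros simp: algebra_simps power2_eq_square)
  qed
  have nonpos: "(grad (x + s *\<^sub>R d) - grad x) \<bullet> d - L * s * (norm d)\<^sup>2 \<le> 0" if "0 \<le> s" for s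
  proof -
    have "(grad (x + s *\<^sub>R d) - grad x) \<bullet> d \<le> norm (grad (x + s *\<^sub>R d) - grad x) * norm d"
      by (rule norm_cauchy_schwarz)
    also have "\<dots> \<le> L * norm (s *\<^sub>R d) * norm d"
      using lipschitz[of "x + s *\<^sub>R d" x] by (simp add: mult_right_mono)
    also have "\<dots> = L * s * (norm d)\<^sup>2" using that by (simp add: power2_eq_square)
    finally show ?thesis by simp
  qed
  have "\<phi> 1 \<le> \<phi> 0"
  proof (rule DERIV_nonpos_imp_nonincreasing[of 0 1])
    fix s :: real assume "0 \<le> s" "s \<le> 1"
    then show "\<exists>y. DERIV \<phi> s :> y \<and> y \<le> 0" using der[of s] nonpos[of s] by blast
  qed simp
  then show ?thesis unfolding \<phi>_def d_def by simp
qed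

lemma norm_sq_diff_le_two_inner:
  fixes a b :: "'v::real_inner"
  shows "(norm a)\<^sup>2 - (norm (a - b))\<^sup>2 \<le> 2 * (a \<bullet> b)"
proof -
  have "(norm (a - b))\<^sup>2 = (norm a)\<^sup>2 - 2 * (a \<bullet> b) + (norm b)\<^sup>2"
    by (simp add: power2_norm_eq_inner inner_diff_left inner_diff_right inner_commute)
  then show ?thesis by (simp add: add_increasing2)
qed

lemma norm_add3_sq_le:
  fixes p q r :: "'v::real_normed_vector"
  shows "(norm (p + q + r))\<^sup>2 \<le> 3 * (norm p)\<^sup>2 + 3 * (norm q)\<^sup>2 + 3 * (norm r)\<^sup>2"
proof -
  have "norm (p + q + r) \<le> norm p + norm q + norm r"
    by (meson add_right_mono norm_triangle_ineq order_trans)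
  then have "(norm (p + q + r))\<^sup>2 \<le> (norm p + norm q + norm r)\<^sup>2"
    by (simp add: power_mono)
  also have "\<dots> \<le> 3 * (norm p)\<^sup>2 + 3 * (norm q)\<^sup>2 + 3 * (norm r)\<^sup>2"
    using sum_squares_ge_zero[of "norm p - norm q" "norm q - norm r"]
      zero_le_power2[of "norm p - norm r"]
    by (simp add: power2_eq_square algebra_simps)
  finally show ?thesis .
qed

lemma sgd_step_upper_bound:
  fixes f :: "'v::real_inner \<Rightarrow> real" and grad :: "'v \<Rightarrow> 'v"
  assumes grad_f: "\<And>y. (f has_derivative (\<lambda>h. grad y \<bullet> h)) (at y)"
    and lipschitz: "\<And>y z. norm (grad y - grad z) \<le> L * norm (y - z)"
    and "0 \<le> L" "0 \<le> \<alpha>" "L * \<alpha> \<le> 1 / 6"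
  shows "f (x - \<alpha> *\<^sub>R g) \<le> f x - \<alpha> * (grad x \<bullet> (g - grad v)) - \<alpha> / 4 * (norm (grad x))\<^sup>2
           + 3 * L * \<alpha>\<^sup>2 / 2 * (norm (g - grad v))\<^sup>2
           + (\<alpha> * L\<^sup>2 / 2 + 3 * L ^ 3 * \<alpha>\<^sup>2 / 2) * (norm (x - v))\<^sup>2"
proof -
  define N where "N = (norm (g - grad v))\<^sup>2"
  define D where "D = (norm (x - v))\<^sup>2"
  define c where "c = L * \<alpha>\<^sup>2 / 2"
  have grad_gap: "(norm (grad x - grad v))\<^sup>2 \<le> L\<^sup>2 * D"
    using power_mono[OF lipschitz[of x v], of 2] unfolding D_def by (simp add: power_mult_distrib)
  have c: "0 \<le> c" "3 * c \<le> \<alpha> / 4"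
    using assms(3-5) mult_right_mono[OF \<open>L * \<alpha> \<le> 1 / 6\<close> \<open>0 \<le> \<alpha>\<close>]
    unfolding c_def by (auto simp: power2_eq_square)
  have "f (x - \<alpha> *\<^sub>R g) \<le> f x - \<alpha> * (grad x \<bullet> (g - grad v)) - \<alpha> * (grad x \<bullet> grad v) + c * (norm g)\<^sup>2"
    using lipschitz_grad_quadratic_upper_bound[OF grad_f lipschitz, of "x - \<alpha> *\<^sub>R g" x] \<open>0 \<le> \<alpha>\<close>
    unfolding c_def by (simp add: power_mult_distrib inner_diff_right algebra_simps)
  moreover have "c * (norm g)\<^sup>2 \<le> 3 * L * \<alpha>\<^sup>2 / 2 * N + 3 * c * (norm (grad x))\<^sup>2 + 3 * L ^ 3 * \<alpha>\<^sup>2 / 2 * D"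
  proof -
    have "c * (norm g)\<^sup>2 \<le> c * (3 * N + 3 * (norm (grad x))\<^sup>2 + 3 * (L\<^sup>2 * D))"
      using norm_add3_sq_le[of "g - grad v" "grad x" "grad v - grad x"] grad_gap c(1)
      unfolding N_def by (intro mult_left_mono) (auto simp: norm_minus_commute)
    then show ?thesis unfolding c_def by (simp add: algebra_simps power2_eq_square power3_eq_cube)
  qed
  moreover have "\<alpha> / 4 * (norm (grad x))\<^sup>2 + \<alpha> / 4 * (norm (grad x))\<^sup>2 - \<alpha> * L\<^sup>2 / 2 * D \<le> \<alpha> * (grad x \<bullet> grad v)"
  proof -
    have "\<alpha> * ((norm (grad x))\<^sup>2 - L\<^sup>2 * D) \<le> \<alpha> * (2 * (grad x \<bullet> grad v))"
      using norm_sq_diff_le_two_inner[of "grad x" "grad v"] grad_gap \<open>0 \<le> \<alpha>\<close>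
      by (intro mult_left_mono) auto
    then show ?thesis by (simp add: algebra_simps)
  qed
  moreover have "3 * c * (norm (grad x))\<^sup>2 \<le> \<alpha> / 4 * (norm (grad x))\<^sup>2"
    by (rule mult_right_mono[OF c(2) zero_le_power2])
  ultimately show ?thesis
    unfolding N_def[symmetric] D_def[symmetric] distrib_right by linarith
qed

lemma integrable_inner_basis_mult_if_square_integrable:
  fixes Y Z :: "'a \<Rightarrow> 'v::euclidean_space"
  assumes [measurable]: "Y \<in> borel_measurable M" "Z \<in> borel_measurable M"
    and "integrable M (\<lambda>\<omega>. (norm (Y \<omega>))\<^sup>2)" "integrable M (\<lambda>\<omega>. (norm (Z \<omega>))\<^sup>2)"
    and "norm b \<le> 1"
  shows "integrable M (\<lambda>\<omega>. (Y \<omega> \<bullet> b) * (Z \<omega> \<bullet> b))"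
proof (rule Bochner_Integration.integrable_bound[where f = "\<lambda>\<omega>. (norm (Y \<omega>))\<^sup>2 + (norm (Z \<omega>))\<^sup>2"])
  show "integrable M (\<lambda>\<omega>. (norm (Y \<omega>))\<^sup>2 + (norm (Z \<omega>))\<^sup>2)"
    using assms by auto
  show "AE \<omega> in M. norm ((Y \<omega> \<bullet> b) * (Z \<omega> \<bullet> b)) \<le> norm ((norm (Y \<omega>))\<^sup>2 + (norm (Z \<omega>))\<^sup>2)"
  proof
    fix \<omega>
    have "\<bar>w \<bullet> b\<bar> \<le> norm w" for w :: 'v
      using Cauchy_Schwarz_ineq2[of w b] mult_left_le[OF \<open>norm b \<le> 1\<close> norm_ge_zero[of w]] by linarith
    then have "\<bar>(Y \<omega> \<bullet> b) * (Z \<omega> \<bullet> b)\<bar> \<le> norm (Y \<omega>) * norm (Z \<omega>)"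
      unfolding abs_mult by (intro mult_mono) auto
    also have "\<dots> \<le> (norm (Y \<omega>))\<^sup>2 + (norm (Z \<omega>))\<^sup>2"
      using zero_le_power2[of "norm (Y \<omega>) - norm (Z \<omega>)"]
        mult_nonneg_nonneg[OF norm_ge_zero[of "Y \<omega>"] norm_ge_zero[of "Z \<omega>"]]
      unfolding power2_eq_square by argo
    finally show "norm ((Y \<omega> \<bullet> b) * (Z \<omega> \<bullet> b)) \<le> norm ((norm (Y \<omega>))\<^sup>2 + (norm (Z \<omega>))\<^sup>2)"
      by simp
  qed
qed measurable

lemma integrable_inner_if_square_integrable:
  fixes Y Z :: "'a \<Rightarrow> 'v::euclidean_space"
  assumes "Y \<in> borel_measurable M" "Z \<in> borel_measurable M"
    and "integrable M (\<lambda>\<omega>. (norm (Y \<omega>))\<^sup>2)" "integrable M (\<lambda>\<omega>. (norm (Z \<omega>))\<^sup>2)"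
  shows "integrable M (\<lambda>\<omega>. Y \<omega> \<bullet> Z \<omega>)"
  by (subst euclidean_inner,
      intro Bochner_Integration.integrable_sum integrable_inner_basis_mult_if_square_integrable)
     (use assms in auto)

lemma (in finite_measure) integrable_inner_const_if_square_integrable:
  fixes Z :: "'a \<Rightarrow> 'v::euclidean_space"
  assumes [measurable]: "Z \<in> borel_measurable M" and "integrable M (\<lambda>\<omega>. (norm (Z \<omega>))\<^sup>2)"
  shows "integrable M (\<lambda>\<omega>. Z \<omega> \<bullet> b)"
proof -
  have "integrable M (\<lambda>\<omega>. norm (Z \<omega>))"
    by (rule square_integrable_imp_integrable) (use assms in auto)
  then show ?thesis by (simp add: integrable_norm_iff)
qed

lemma (in sigma_finite_subalgebra) integral_inner_eq_zero_if_cond_exp_zero: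
  fixes Y Z :: "'a \<Rightarrow> 'v::euclidean_space"
  assumes [measurable]: "Y \<in> borel_measurable F" "Z \<in> borel_measurable M"
    and "integrable M (\<lambda>\<omega>. (norm (Y \<omega>))\<^sup>2)" "integrable M (\<lambda>\<omega>. (norm (Z \<omega>))\<^sup>2)"
    and cond_zero: "\<And>b. b \<in> Basis \<Longrightarrow> AE \<omega> in M. real_cond_exp M F (\<lambda>\<omega>. Z \<omega> \<bullet> b) \<omega> = 0"
  shows "(\<integral>\<omega>. Y \<omega> \<bullet> Z \<omega> \<partial>M) = 0"
proof -
  have [measurable]: "Y \<in> borel_measurable M" by (rule measurable_from_subalg[OF subalg]) simp
  have int_b: "integrable M (\<lambda>\<omega>. (Y \<omega> \<bullet> b) * (Z \<omega> \<bullet> b))" if "b \<in> Basis" for b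
    by (rule integrable_inner_basis_mult_if_square_integrable) (use assms that in auto)
  have "(\<integral>\<omega>. (Y \<omega> \<bullet> b) * (Z \<omega> \<bullet> b) \<partial>M) = 0" if b: "b \<in> Basis" for b
  proof -
    have "(\<integral>\<omega>. (Y \<omega> \<bullet> b) * (Z \<omega> \<bullet> b) \<partial>M)
        = (\<integral>\<omega>. (Y \<omega> \<bullet> b) * real_cond_exp M F (\<lambda>\<omega>. Z \<omega> \<bullet> b) \<omega> \<partial>M)"
      by (rule real_cond_exp_intg(2)[symmetric]) (use int_b[OF b] in auto)
    also have "\<dots> = 0"
      using cond_zero[OF b] by (subst integral_cong_AE[where g = "\<lambda>_. 0"]) auto
    finally show ?thesis .
  qed
  then show ?thesis
    by (subst euclidean_inner, subst Bochner_Integration.integral_sum) (use int_b in auto)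
qed

lemma (in sigma_finite_subalgebra) cond_exp_inner_diff_eq_zero:
  fixes G H :: "'a \<Rightarrow> 'v::euclidean_space"
  assumes [measurable]: "H \<in> borel_measurable F"
    and "integrable M (\<lambda>\<omega>. G \<omega> \<bullet> b)" "integrable M (\<lambda>\<omega>. H \<omega> \<bullet> b)"
    and "AE \<omega> in M. real_cond_exp M F (\<lambda>\<omega>. G \<omega> \<bullet> b) \<omega> = H \<omega> \<bullet> b"
  shows "AE \<omega> in M. real_cond_exp M F (\<lambda>\<omega>. (G \<omega> - H \<omega>) \<bullet> b) \<omega> = 0"
proof -
  have "AE \<omega> in M. real_cond_exp M F (\<lambda>\<omega>. H \<omega> \<bullet> b) \<omega> = H \<omega> \<bullet> b"
    by (rule real_cond_exp_F_meas) (use assms in auto)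
  with real_cond_exp_diff[OF assms(2,3)] assms(4) show ?thesis
    by eventually_elim (simp add: inner_diff_left)
qed

lemma (in sigma_finite_subalgebra) integral_le_if_cond_exp_le:
  assumes "prob_space M" "integrable M h" "AE \<omega> in M. real_cond_exp M F h \<omega> \<le> c"
  shows "(\<integral>\<omega>. h \<omega> \<partial>M) \<le> c"
proof -
  interpret prob_space M by (rule assms(1))
  have "(\<integral>\<omega>. h \<omega> \<partial>M) = (\<integral>\<omega>. real_cond_exp M F h \<omega> \<partial>M)"
    by (rule real_cond_exp_int(2)[symmetric, OF assms(2)])
  also have "\<dots> \<le> (\<integral>\<omega>. c \<partial>M)"
    by (rule integral_mono_AE) (use assms in auto)
  also have "\<dots> = c" by (simp add: prob_space)
  finally show ?thesis .
qed

lemma (in sigma_finite_subalgebra) integral_inner_unbiased_error_eq_zero: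
  fixes Y G H :: "'a \<Rightarrow> 'v::euclidean_space"
  assumes "finite_measure M"
    and [measurable]: "Y \<in> borel_measurable F" "H \<in> borel_measurable F" "G \<in> borel_measurable M"
    and "integrable M (\<lambda>\<omega>. (norm (Y \<omega>))\<^sup>2)" "integrable M (\<lambda>\<omega>. (norm (G \<omega> - H \<omega>))\<^sup>2)"
    and G_int: "\<And>b. integrable M (\<lambda>\<omega>. G \<omega> \<bullet> b)"
    and unbiased: "\<And>b. AE \<omega> in M. real_cond_exp M F (\<lambda>\<omega>. G \<omega> \<bullet> b) \<omega> = H \<omega> \<bullet> b"
  shows "(\<integral>\<omega>. Y \<omega> \<bullet> (G \<omega> - H \<omega>) \<partial>M) = 0"
proof -
  interpret finite_measure M by (rule assms(1))
  have [measurable]: "H \<in> borel_measurable M" by (rule measurable_from_subalg[OF subalg]) simp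
  have "integrable M (\<lambda>\<omega>. H \<omega> \<bullet> b)" for b
  proof -
    have "integrable M (\<lambda>\<omega>. (G \<omega> - H \<omega>) \<bullet> b)"
      by (rule integrable_inner_const_if_square_integrable) (use assms in auto)
    from Bochner_Integration.integrable_diff[OF G_int[of b] this] show ?thesis
      by (simp add: inner_diff_left)
  qed
  then have "AE \<omega> in M. real_cond_exp M F (\<lambda>\<omega>. (G \<omega> - H \<omega>) \<bullet> b) \<omega> = 0" for b
    by (intro cond_exp_inner_diff_eq_zero G_int unbiased) measurable
  then show ?thesis
    by (intro integral_inner_eq_zero_if_cond_exp_zero) (use assms in auto)
qed

lemma (in sigma_finite_subalgebra) sgd_expected_step_bound:
  fixes f :: "'v::euclidean_space \<Rightarrow> real" and grad :: "'v \<Rightarrow> 'v" and X V G :: "'a \<Rightarrow> 'v"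
  assumes prob: "prob_space M"
    and grad_f: "\<And>y. (f has_derivative (\<lambda>h. grad y \<bullet> h)) (at y)"
    and lipschitz: "\<And>y z. norm (grad y - grad z) \<le> L * norm (y - z)"
    and "0 \<le> L" "0 \<le> \<alpha>" "L * \<alpha> \<le> 1 / 6"
    and [measurable]: "X \<in> borel_measurable F" "V \<in> borel_measurable F" "G \<in> borel_measurable M"
    and f_int: "integrable M (\<lambda>\<omega>. f (X \<omega>))" "integrable M (\<lambda>\<omega>. f (X \<omega> - \<alpha> *\<^sub>R G \<omega>))"
    and G_int: "\<And>b. integrable M (\<lambda>\<omega>. G \<omega> \<bullet> b)"
    and unbiased: "\<And>b. AE \<omega> in M. real_cond_exp M F (\<lambda>\<omega>. G \<omega> \<bullet> b) \<omega> = grad (V \<omega>) \<bullet> b"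
    and noise_int: "integrable M (\<lambda>\<omega>. (norm (G \<omega> - grad (V \<omega>)))\<^sup>2)"
    and noise_var: "AE \<omega> in M. real_cond_exp M F (\<lambda>\<omega>. (norm (G \<omega> - grad (V \<omega>)))\<^sup>2) \<omega> \<le> \<sigma>\<^sup>2"
    and gap_int: "integrable M (\<lambda>\<omega>. (norm (X \<omega> - V \<omega>))\<^sup>2)"
    and gap: "(\<integral>\<omega>. (norm (X \<omega> - V \<omega>))\<^sup>2 \<partial>M) \<le> \<delta>"
    and grad_int: "integrable M (\<lambda>\<omega>. (norm (grad (X \<omega>)))\<^sup>2)"
  shows "(\<integral>\<omega>. f (X \<omega> - \<alpha> *\<^sub>R G \<omega>) \<partial>M)
    \<le> (\<integral>\<omega>. f (X \<omega>) \<partial>M) - \<alpha> / 4 * (\<integral>\<omega>. (norm (grad (X \<omega>)))\<^sup>2 \<partial>M)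
       + 3 * L * \<alpha>\<^sup>2 / 2 * \<sigma>\<^sup>2 + (\<alpha> * L\<^sup>2 / 2 + 3 * L ^ 3 * \<alpha>\<^sup>2 / 2) * \<delta>"
proof -
  interpret prob_space M by (rule prob)
  have [measurable]: "grad \<in> borel_measurable borel"
    using lipschitz \<open>0 \<le> L\<close>
    by (intro borel_measurable_continuous_onI lipschitz_on_continuous_on[of L])
       (auto simp: lipschitz_on_def dist_norm)
  have [measurable]: "X \<in> borel_measurable M" "V \<in> borel_measurable M"
    by (rule measurable_from_subalg[OF subalg], measurable)+
  define Z where "Z \<omega> = G \<omega> - grad (V \<omega>)" for \<omega>
  define c where "c = \<alpha> * L\<^sup>2 / 2 + 3 * L ^ 3 * \<alpha>\<^sup>2 / 2"
  have Z_int: "integrable M (\<lambda>\<omega>. (norm (Z \<omega>))\<^sup>2)"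
    using noise_int unfolding Z_def .
  have cross: "(\<integral>\<omega>. grad (X \<omega>) \<bullet> Z \<omega> \<partial>M) = 0"
    unfolding Z_def using finite_measure_axioms grad_int noise_int G_int unbiased
    by (intro integral_inner_unbiased_error_eq_zero) measurable
  have cross_int: "integrable M (\<lambda>\<omega>. grad (X \<omega>) \<bullet> Z \<omega>)"
    by (rule integrable_inner_if_square_integrable) (use grad_int Z_int in \<open>auto simp: Z_def\<close>)
  have noise: "(\<integral>\<omega>. (norm (Z \<omega>))\<^sup>2 \<partial>M) \<le> \<sigma>\<^sup>2"
    using integral_le_if_cond_exp_le[OF prob noise_int noise_var] unfolding Z_def .
  have "(\<integral>\<omega>. f (X \<omega> - \<alpha> *\<^sub>R G \<omega>) \<partial>M)
      \<le> (\<integral>\<omega>. f (X \<omega>) - \<alpha> * (grad (X \<omega>) \<bullet> Z \<omega>) - \<alpha> / 4 * (norm (grad (X \<omega>)))\<^sup>2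
           + 3 * L * \<alpha>\<^sup>2 / 2 * (norm (Z \<omega>))\<^sup>2 + c * (norm (X \<omega> - V \<omega>))\<^sup>2 \<partial>M)"
    using f_int cross_int grad_int Z_int gap_int sgd_step_upper_bound[OF grad_f lipschitz assms(4-6)]
    by (intro integral_mono) (simp_all add: Z_def c_def)
  also have "\<dots> = (\<integral>\<omega>. f (X \<omega>) \<partial>M) - \<alpha> / 4 * (\<integral>\<omega>. (norm (grad (X \<omega>)))\<^sup>2 \<partial>M)
      + 3 * L * \<alpha>\<^sup>2 / 2 * (\<integral>\<omega>. (norm (Z \<omega>))\<^sup>2 \<partial>M) + c * (\<integral>\<omega>. (norm (X \<omega> - V \<omega>))\<^sup>2 \<partial>M)"
    using f_int(1) cross_int grad_int Z_int gap_int by (simp add: cross)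
  also have "\<dots> \<le> (\<integral>\<omega>. f (X \<omega>) \<partial>M) - \<alpha> / 4 * (\<integral>\<omega>. (norm (grad (X \<omega>)))\<^sup>2 \<partial>M)
       + 3 * L * \<alpha>\<^sup>2 / 2 * \<sigma>\<^sup>2 + c * \<delta>"
    using noise gap assms(4,5) unfolding c_def by (intro add_mono mult_left_mono) auto
  finally show ?thesis unfolding c_def .
qed

theorem mainTheorem4:
  fixes M :: "'a measure"
    and F :: "nat \<Rightarrow> 'a measure"
    and f :: "'v::euclidean_space \<Rightarrow> real"
    and grad :: "'v \<Rightarrow> 'v"
    and x v g :: "nat \<Rightarrow> 'a \<Rightarrow> 'v"
    and x0 :: 'v
    and L \<alpha> B \<sigma> :: real
  assumes prob: "prob_space M"
    and filt_sub: "\<And>t. sigma_finite_subalgebra M (F t)"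
    and filt_mono: "\<And>s t. s \<le> t \<Longrightarrow> sets (F s) \<subseteq> sets (F t)"
    and grad_f: "\<And>y. (f has_derivative (\<lambda>h. grad y \<bullet> h)) (at y)"
    and L_pos: "L > 0"
    and lipschitz: "\<And>y z. norm (grad y - grad z) \<le> L * norm (y - z)"
    and alpha_pos: "\<alpha> > 0"
    and alpha_le: "\<alpha> \<le> 1 / (6 * L)"
    and B_pos: "B > 0"
    and x_init: "\<And>\<omega>. \<omega> \<in> space M \<Longrightarrow> x 0 \<omega> = x0"
    and x_meas: "\<And>t. x t \<in> borel_measurable (F t)"
    and v_meas: "\<And>t. v t \<in> borel_measurable (F t)"
    and g_meas: "\<And>t. g t \<in> borel_measurable (F (Suc t))"
    and update: "\<And>t \<omega>. \<omega> \<in> space M \<Longrightarrow> x (Suc t) \<omega> = x t \<omega> - \<alpha> *\<^sub>R g t \<omega>"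
    and g_int: "\<And>t b. integrable M (\<lambda>\<omega>. g t \<omega> \<bullet> b)"
    and g_unbiased: "\<And>t b. AE \<omega> in M.
        real_cond_exp M (F t) (\<lambda>\<omega>. g t \<omega> \<bullet> b) \<omega> = grad (v t \<omega>) \<bullet> b"
    and noise_int: "\<And>t. integrable M (\<lambda>\<omega>. (norm (g t \<omega> - grad (v t \<omega>)))\<^sup>2)"
    and g_var: "\<And>t. AE \<omega> in M.
        real_cond_exp M (F t) (\<lambda>\<omega>. (norm (g t \<omega> - grad (v t \<omega>)))\<^sup>2) \<omega> \<le> \<sigma>\<^sup>2"
    and elastic_int: "\<And>t. integrable M (\<lambda>\<omega>. (norm (x t \<omega> - v t \<omega>))\<^sup>2)"
    and elastic: "\<And>t. (\<integral>\<omega>. (norm (x t \<omega> - v t \<omega>))\<^sup>2 \<partial>M) \<le> \<alpha>\<^sup>2 * B\<^sup>2"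
    and f_int: "\<And>t. integrable M (\<lambda>\<omega>. f (x t \<omega>))"
    and gradx_int: "\<And>t. integrable M (\<lambda>\<omega>. (norm (grad (x t \<omega>)))\<^sup>2)"
  shows "(\<integral>\<omega>. f (x (Suc t) \<omega>) \<partial>M)
    \<le> (\<integral>\<omega>. f (x t \<omega>) \<partial>M)
       - \<alpha> / 4 * (\<integral>\<omega>. (norm (grad (x t \<omega>)))\<^sup>2 \<partial>M)
       + \<alpha> ^ 3 * B\<^sup>2 * L\<^sup>2 / 2
       + 3 * L * \<alpha>\<^sup>2 * \<sigma>\<^sup>2 / 2
       + 3 * L ^ 3 * \<alpha> ^ 4 * B\<^sup>2 / 2"

proof -
  interpret sigma_finite_subalgebra M "F t" by (rule filt_sub)
  have [measurable]: "g t \<in> borel_measurable M"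
    using g_meas[of t] sigma_finite_subalgebra.subalg[OF filt_sub[of "Suc t"]]
    by (blast intro: measurable_from_subalg)
  have step_int: "integrable M (\<lambda>\<omega>. f (x t \<omega> - \<alpha> *\<^sub>R g t \<omega>))"
    using f_int[of "Suc t"] Bochner_Integration.integrable_cong[OF refl, of M "\<lambda>\<omega>. f (x (Suc t) \<omega>)"]
    by (simp add: update)
  have "(\<integral>\<omega>. f (x (Suc t) \<omega>) \<partial>M) = (\<integral>\<omega>. f (x t \<omega> - \<alpha> *\<^sub>R g t \<omega>) \<partial>M)"
    by (rule Bochner_Integration.integral_cong) (simp_all add: update)
  also have "\<dots> \<le> (\<integral>\<omega>. f (x t \<omega>) \<partial>M) - \<alpha> / 4 * (\<integral>\<omega>. (norm (grad (x t \<omega>)))\<^sup>2 \<partial>M)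
       + 3 * L * \<alpha>\<^sup>2 / 2 * \<sigma>\<^sup>2 + (\<alpha> * L\<^sup>2 / 2 + 3 * L ^ 3 * \<alpha>\<^sup>2 / 2) * (\<alpha>\<^sup>2 * B\<^sup>2)"
    using L_pos alpha_pos alpha_le
    by (intro sgd_expected_step_bound[OF prob grad_f lipschitz _ _ _ x_meas v_meas _ f_int step_int
          g_int g_unbiased noise_int g_var elastic_int elastic gradx_int])
       (simp_all add: field_simps)
  also have "\<dots> = (\<integral>\<omega>. f (x t \<omega>) \<partial>M) - \<alpha> / 4 * (\<integral>\<omega>. (norm (grad (x t \<omega>)))\<^sup>2 \<partial>M)
       + \<alpha> ^ 3 * B\<^sup>2 * L\<^sup>2 / 2 + 3 * L * \<alpha>\<^sup>2 * \<sigma>\<^sup>2 / 2 + 3 * L ^ 3 * \<alpha> ^ 4 * B\<^sup>2 / 2"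
    by (simp add: algebra_simps power2_eq_square power3_eq_cube power4_eq_xxxx)
  finally show ?thesis .
qed

end
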